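(* Let $m=2\ell$ be an even positive integer, and let $C^{(m)}=(c_{ij})$ be the $m\times m$ coloring matrix with $c_{ij}=1$ if $i+j\le m+1$, except that $c_{ij}=0$ when $i+j=m$ and both $i,j$ are odd; and $c_{ij}=0$ if $i+j>m+1$. Then for every $n\ge1$, $$t_{C^{(m)}}(n)=\frac{\ell}{n}\cdot2^{2n-1}\binom{\frac{\ell+1}{2}n-\frac{\ell}{2}-1}{n-1}.$$
   Context: A plane tree is an unlabeled rooted tree in which the children of every vertex are linearly ordered. A coloring matrix is an $m\times m$ matrix $A=(a_{ij})$ with entries in $\{0,1\}$. An $A$-coloring of a plane tree assigns to each vertex a color in $\{1,\dots,m\}$ such that whenever a vertex of color $j$ is a child of a vertex of color $i$, $a_{ij}=1$. Let $t_A(n)$ be the number of pairs (plane tree with $n$ vertices, $A$-coloring of it). For real $y$ and integer $k\ge0$, $\binom{y}{k}=y(y-1)\cdots(y-k+1)/k!$. *)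

theory Defs
  imports Complex_Main
begin

text \<open>An unlabeled plane tree is a
  \<open>unit ltree\<close>; an assignment of colours to its vertices is a
  \<open>nat ltree\<close> of the same shape.\<close>
datatype 'a ltree = LNode 'a "'a ltree list"

type_synonym plane_tree = "unit ltree"

fun label :: "'a ltree \<Rightarrow> 'a" where
  "label (LNode a ts) = a"

fun num_vertices :: "'a ltree \<Rightarrow> nat" where
  "num_vertices (LNode a ts) = Suc (sum_list (map num_vertices ts))"

definition shape :: "'a ltree \<Rightarrow> plane_tree" where
  "shape t = map_ltree (\<lambda>_. ()) t"

fun valid_col :: "nat \<Rightarrow> (nat \<Rightarrow> nat \<Rightarrow> bool) \<Rightarrow> nat ltree \<Rightarrow> bool" where
  "valid_col m A (LNode i ts) =
     (1 \<le> i \<and> i \<le> m \<and> (\<forall>t\<in>set ts. A i (label t) \<and> valid_col m A t))"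

definition is_A_coloring :: "nat \<Rightarrow> (nat \<Rightarrow> nat \<Rightarrow> bool) \<Rightarrow> plane_tree \<Rightarrow> nat ltree \<Rightarrow> bool" where
  "is_A_coloring m A T c \<longleftrightarrow> shape c = T \<and> valid_col m A c"

definition t_A :: "nat \<Rightarrow> (nat \<Rightarrow> nat \<Rightarrow> bool) \<Rightarrow> nat \<Rightarrow> nat" where
  "t_A m A n = card {(T, c). num_vertices T = n \<and> is_A_coloring m A T c}"

definition C_mat :: "nat \<Rightarrow> nat \<Rightarrow> nat \<Rightarrow> bool" where
  "C_mat m i j \<longleftrightarrow> i + j \<le> m + 1 \<and> \<not> (i + j = m \<and> odd i \<and> odd j)"

end

theory Submission
  imports Defs "HOL-Computational_Algebra.Formal_Laurent_Series"
begin

(* Let F i be the generating function of A-coloured plane trees whose root has colour i.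
   Removing the root gives F i * (1 - (sum of F j over the j with a_ij = 1)) = x, and this system
   determines the F i. For C^(2l) it is solved explicitly: with y = 4x (1+y)^((l+1)/2) and
   v = (1+y)^(-1/2), colours 2p-1 and 2p both get (v^(p-1) - v^p)/2. Indeed row i of C^(2l) consists
   of the complete colour pairs 1, ..., l-p (where p is the pair of i) and one colour of pair l+1-p,
   so every equation collapses to v^(l-1) (1 - v^2) = 4x. Summing over all colours telescopes to
   1 - (1+y)^(-l/2), whose coefficients follow from Lagrange inversion, proved via residues of
   formal Laurent series. *)

section \<open>Lagrange inversion\<close>

lemma fls_residue_inverse_power_times_deriv:
  fixes y :: "'a::field_char_0 fps"
  assumes "y $ 0 = 0" and "y $ 1 \<noteq> 0" and "d \<ge> 1"
  shows "fls_residue (inverse (fps_to_fls y) ^ d * fls_deriv (fps_to_fls y)) = (if d = 1 then 1 else 0)"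
proof -
  let ?Y = "fps_to_fls y"
  have "subdegree y = 1"
    using assms by (intro subdegreeI) auto
  then have subdegree_Y: "fls_subdegree ?Y = 1"
    by (simp add: fls_subdegree_fls_to_fps)
  show ?thesis
  proof (cases "d = 1")
    case True
    then show ?thesis
      using fls_residue_deriv_times_inverse_eq_subdegree(2)[of ?Y] subdegree_Y by simp
  next
    case False
    then obtain e where d: "d = Suc (Suc e)"
      using \<open>d \<ge> 1\<close> by (cases d; cases "d - 1") auto
    \<comment> \<open>for \<open>d \<ge> 2\<close> the integrand is a derivative, hence has no residue\<close>
    have "fls_deriv (inverse ?Y ^ Suc e) =
        of_nat (Suc e) * inverse ?Y ^ e * (- fls_deriv ?Y * (inverse ?Y)\<^sup>2)"
      by (simp only: fls_deriv_power fls_inverse_deriv diff_Suc_1)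
    also have "\<dots> = - (fls_const (of_nat (Suc e)) * (inverse ?Y ^ d * fls_deriv ?Y))"
      by (simp add: d power2_eq_square algebra_simps fls_of_nat)
    finally have "fls_deriv (inverse ?Y ^ Suc e) =
        - (fls_const (of_nat (Suc e)) * (inverse ?Y ^ d * fls_deriv ?Y))" .
    then have "of_nat (Suc e) * fls_residue (inverse ?Y ^ d * fls_deriv ?Y) = 0"
      using fls_residue_deriv[of "inverse ?Y ^ Suc e"]
      by (metis fls_residue_fls_const_times(1) fls_residue_def fls_uminus_nth neg_equal_0_iff_equal)
    then show ?thesis
      using False of_nat_neq_0[of e] by (simp del: of_nat_Suc fls_residue_def)
  qed
qed

lemma fps_cutoff_eq_sum_monomials:
  "fps_cutoff n (f :: 'a::comm_ring_1 fps) = (\<Sum>k<n. fps_const (f $ k) * fps_X ^ k)"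
  by (simp add: fps_eq_iff fps_sum_nth if_distrib[of "(*) _"] sum.delta' cong: if_cong)

lemma fps_to_fls_sum: "fps_to_fls (sum f A) = (\<Sum>k\<in>A. fps_to_fls (f k))"
  by (induction A rule: infinite_finite_induct) simp_all

(* Writing P = X^n R + (terms of degree < n), the series y^(-n) P(y) y' splits into a power series
   and the terms P_k y^(k-n) y', of which only k = n - 1 has a residue. *)
lemma fls_residue_compose_times_deriv:
  fixes y P :: "'a::field_char_0 fps"
  assumes y0: "y $ 0 = 0" and y1: "y $ 1 \<noteq> 0" and "n \<ge> 1"
  shows "fls_residue (inverse (fps_to_fls y) ^ n * fps_to_fls ((P oo y) * fps_deriv y)) = P $ (n - 1)"
proof -
  let ?Y = "fps_to_fls y" and ?Y' = "fls_deriv (fps_to_fls y)"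
  define R where "R = fps_shift n P"
  have "?Y \<noteq> 0"
    using y1 by (auto simp: fps_eq_iff)
  then have cancel: "inverse ?Y ^ n * ?Y ^ k = inverse ?Y ^ (n - k)" if "k \<le> n" for k
    using that by (simp add: power_diff power_inverse field_simps)
  have P_split: "P = fps_X ^ n * R + (\<Sum>k<n. fps_const (P $ k) * fps_X ^ k)"
    using fps_shift_cutoff'[of n P] by (simp add: R_def fps_cutoff_eq_sum_monomials)
  have "P oo y = y ^ n * (R oo y) + (\<Sum>k<n. fps_const (P $ k) * y ^ k)"
    by (subst P_split)
      (simp add: fps_compose_add_distrib fps_compose_mult_distrib[OF y0] fps_compose_sum_distrib
        fps_compose_power[OF y0, symmetric] y0)
  then have expand: "fps_to_fls ((P oo y) * fps_deriv y) =
      ?Y ^ n * fps_to_fls ((R oo y) * fps_deriv y) + (\<Sum>k<n. fls_const (P $ k) * ?Y ^ k * ?Y')"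
    by (simp add: fls_times_fps_to_fls fps_to_fls_sum fps_to_fls_power fls_deriv_fps_to_fls
        algebra_simps sum_distrib_right sum_distrib_left)
  have quotient_split: "inverse ?Y ^ n * fps_to_fls ((P oo y) * fps_deriv y) =
      fps_to_fls ((R oo y) * fps_deriv y) + (\<Sum>k<n. fls_const (P $ k) * (inverse ?Y ^ (n - k) * ?Y'))"
  proof -
    have "(\<Sum>k<n. inverse ?Y ^ n * (fls_const (P $ k) * ?Y ^ k * ?Y')) =
        (\<Sum>k<n. fls_const (P $ k) * (inverse ?Y ^ (n - k) * ?Y'))"
      by (rule sum.cong) (use cancel in \<open>auto simp: ac_simps\<close>)
    moreover have "inverse ?Y ^ n * (?Y ^ n * F) = F" for F
      using cancel[of n] by (simp add: mult.assoc[symmetric])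
    ultimately show ?thesis
      by (simp only: expand distrib_left sum_distrib_left)
  qed
  have "fls_residue (inverse ?Y ^ n * fps_to_fls ((P oo y) * fps_deriv y)) =
      fls_residue (fps_to_fls ((R oo y) * fps_deriv y)) +
      (\<Sum>k<n. P $ k * fls_residue (inverse ?Y ^ (n - k) * ?Y'))"
    by (simp add: quotient_split fls_nth_sum)
  also have "fls_residue (fps_to_fls ((R oo y) * fps_deriv y)) = 0"
    by (simp add: fls_residue_power_series fls_subdegree_fls_to_fps_gt0 del: fls_residue_def)
  also have "(\<Sum>k<n. P $ k * fls_residue (inverse ?Y ^ (n - k) * ?Y')) =
      (\<Sum>k<n. if k = n - 1 then P $ k else 0)"
    by (rule sum.cong)
      (auto simp: fls_residue_inverse_power_times_deriv[OF y0 y1] simp del: fls_residue_def)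
  also have "\<dots> = P $ (n - 1)"
    using \<open>n \<ge> 1\<close> by simp
  finally show ?thesis
    by simp
qed

theorem lagrange_inversion_coeff:
  fixes y phi G :: "'a::field_char_0 fps"
  assumes y0: "y $ 0 = 0" and "phi $ 0 \<noteq> 0" and y_eq: "y = fps_X * (phi oo y)" and "n \<ge> 1"
  shows "of_nat n * (G oo y) $ n = (fps_deriv G * phi ^ n) $ (n - 1)"
proof -
  define Q where "Q = fps_deriv G * phi ^ n"
  let ?Y = "fps_to_fls y" and ?D = "fps_to_fls (fps_deriv (G oo y))"
  have y1: "y $ 1 \<noteq> 0"
    using \<open>phi $ 0 \<noteq> 0\<close> by (subst y_eq) simp
  then have "?Y \<noteq> 0"
    by (auto simp: fps_eq_iff)
  \<comment> \<open>equivalently \<open>X^(-n) (G(y))' = y^(-n) Q(y) y'\<close>, whose residues are \<open>n [X^n] G(y)\<close>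
    and \<open>[X^(n-1)] Q\<close>\<close>
  have substitution: "fps_X ^ n * ((Q oo y) * fps_deriv y) = y ^ n * fps_deriv (G oo y)"
  proof -
    have "y ^ n = fps_X ^ n * (phi oo y) ^ n"
      by (subst y_eq) (simp add: power_mult_distrib)
    then show ?thesis
      by (simp add: Q_def fps_compose_mult_distrib[OF y0] fps_compose_power[OF y0]
          fps_compose_deriv[OF y0] algebra_simps)
  qed
  let ?B = "fps_to_fls ((Q oo y) * fps_deriv y)"
  have transformed: "fls_X_intpow (int n) * ?B = ?Y ^ n * ?D"
    using arg_cong[OF substitution, of fps_to_fls]
    by (simp add: fls_times_fps_to_fls fps_to_fls_power fls_X_power_conv_shift_1)
  have "inverse ?Y ^ n * ?B = inverse ?Y ^ n * (fls_X_intpow (- int n) * (fls_X_intpow (int n) * ?B))"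
    using fls_X_intpow_times_fls_X_intpow[of "- int n" "int n", where 'a='a]
    by (simp add: mult.assoc[symmetric])
  also have "\<dots> = fls_X_intpow (- int n) * (inverse ?Y ^ n * (fls_X_intpow (int n) * ?B))"
    by (rule mult.left_commute)
  also have "\<dots> = fls_X_intpow (- int n) * (inverse ?Y ^ n * ?Y ^ n * ?D)"
    by (simp only: transformed mult.assoc)
  also have "inverse ?Y ^ n * ?Y ^ n = 1"
    using \<open>?Y \<noteq> 0\<close> by (simp add: power_inverse)
  finally have "inverse ?Y ^ n * ?B = fls_X_intpow (- int n) * ?D"
    by simp
  then have "Q $ (n - 1) = fls_residue (fls_X_intpow (- int n) * ?D)"
    using fls_residue_compose_times_deriv[OF y0 y1 \<open>n \<ge> 1\<close>, of Q] by simp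
  also have "\<dots> = fps_deriv (G oo y) $ (n - 1)"
    using fls_residue_shift_nth[of ?D "int n - 1"] \<open>n \<ge> 1\<close> by (simp add: nat_diff_distrib)
  finally show ?thesis
    using \<open>n \<ge> 1\<close> by (simp add: Q_def)
qed

lemma fps_deriv_binomial: "fps_deriv (fps_binomial c) = fps_const c * fps_binomial (c - 1)"
proof -
  have "fps_const c * fps_binomial c / (1 + fps_X) = fps_const c * fps_binomial c * fps_binomial (-1)"
    by (simp add: fps_divide_unit fps_binomial_minus_one)
  then show ?thesis
    by (simp add: fps_binomial_deriv fps_binomial_add_mult[symmetric] mult.assoc)
qed

lemma fps_compose_binomial_mult:
  assumes "y $ 0 = 0"
  shows "(fps_binomial a oo y) * (fps_binomial b oo y) = fps_binomial (a + b) oo y"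
  by (simp add: fps_binomial_add_mult fps_compose_mult_distrib[OF assms])

lemma fps_compose_binomial_power:
  assumes "y $ 0 = 0"
  shows "(fps_binomial a oo y) ^ k = fps_binomial (of_nat k * a) oo y"
  by (simp add: fps_compose_power[OF assms] fps_binomial_power)

definition binomial_root :: "'a \<Rightarrow> 'a \<Rightarrow> 'a::field_char_0 fps" where
  "binomial_root c a = fps_inv (fps_const (inverse c) * fps_X * fps_binomial (- a))"

lemma binomial_root_nth_0: "binomial_root c a $ 0 = 0"
  by (simp add: binomial_root_def fps_inv_def)

lemma binomial_root_times_binomial:
  assumes "c \<noteq> 0"
  shows "binomial_root c a * (fps_binomial (- a) oo binomial_root c a) = fps_const c * fps_X"
proof -
  let ?y = "binomial_root c a"
  have "(fps_const (inverse c) * fps_X * fps_binomial (- a)) oo ?y = fps_X"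
    unfolding binomial_root_def using assms by (intro fps_inv_right) simp_all
  then have "fps_const (inverse c) * (?y * (fps_binomial (- a) oo ?y)) = fps_X"
    by (simp add: fps_compose_mult_distrib[OF binomial_root_nth_0] binomial_root_nth_0 mult.assoc)
  then have "fps_const c * fps_const (inverse c) * (?y * (fps_binomial (- a) oo ?y)) =
      fps_const c * fps_X"
    by (metis mult.assoc)
  then show ?thesis
    using assms by (simp add: fps_const_mult)
qed

lemma binomial_root_fixpoint:
  assumes "c \<noteq> 0"
  shows "binomial_root c a = fps_X * ((fps_const c * fps_binomial a) oo binomial_root c a)"
proof -
  let ?y = "binomial_root c a"
  have "?y = ?y * (fps_binomial (- a) oo ?y) * (fps_binomial a oo ?y)"
    by (simp add: mult.assoc fps_compose_binomial_mult[OF binomial_root_nth_0])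
  also have "\<dots> = fps_const c * fps_X * (fps_binomial a oo ?y)"
    by (simp only: binomial_root_times_binomial[OF assms])
  also have "\<dots> = fps_X * ((fps_const c * fps_binomial a) oo ?y)"
    by (simp add: fps_compose_mult_distrib[OF binomial_root_nth_0] algebra_simps)
  finally show ?thesis .
qed

theorem binomial_root_binomial_coeff:
  assumes "c \<noteq> 0" and "n \<ge> 1"
  shows "of_nat n * (fps_binomial b oo binomial_root c a) $ n =
    b * c ^ n * ((of_nat n * a + b - 1) gchoose (n - 1))"
proof -
  have "of_nat n * (fps_binomial b oo binomial_root c a) $ n =
      (fps_deriv (fps_binomial b) * (fps_const c * fps_binomial a) ^ n) $ (n - 1)"
    using assms by (intro lagrange_inversion_coeff binomial_root_nth_0 binomial_root_fixpoint) simp_all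
  also have "fps_deriv (fps_binomial b) * (fps_const c * fps_binomial a) ^ n =
      fps_const (b * c ^ n) * fps_binomial (of_nat n * a + b - 1)"
    by (simp add: fps_deriv_binomial power_mult_distrib fps_binomial_power fps_const_power
        fps_binomial_add_mult[symmetric] mult.assoc mult.left_commute[of "fps_binomial _"] algebra_simps)
  finally show ?thesis
    by simp
qed

section \<open>Generating functions of coloured plane trees\<close>

lemma fps_mult_nth_Suc_cong:
  fixes f g f' g' :: "'a::comm_semiring_1 fps"
  assumes "f $ 0 = 0" "f' $ 0 = 0" "g $ 0 = 0" "g' $ 0 = 0"
    and "\<And>k. k \<le> n \<Longrightarrow> f $ k = f' $ k" "\<And>k. k \<le> n \<Longrightarrow> g $ k = g' $ k"
  shows "(f * g) $ Suc n = (f' * g') $ Suc n"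
  unfolding fps_mult_nth
proof (rule sum.cong)
  fix a assume "a \<in> {0..Suc n}"
  then consider "a = 0" | "a = Suc n" | "1 \<le> a" "a \<le> n"
    by fastforce
  then show "f $ a * g $ (Suc n - a) = f' $ a * g' $ (Suc n - a)"
    by cases (simp_all add: assms)
qed simp

(* The coefficient of x^(n+1) in F i = x + F i * sum F (J i) involves only coefficients of
   degree at most n. *)
lemma fps_tree_system_unique:
  fixes F G :: "'i \<Rightarrow> 'a::comm_ring_1 fps"
  assumes J: "\<And>i. i \<in> I \<Longrightarrow> J i \<subseteq> I"
    and F0: "\<And>i. i \<in> I \<Longrightarrow> F i $ 0 = 0" and G0: "\<And>i. i \<in> I \<Longrightarrow> G i $ 0 = 0"
    and F: "\<And>i. i \<in> I \<Longrightarrow> F i * (1 - sum F (J i)) = fps_X"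
    and G: "\<And>i. i \<in> I \<Longrightarrow> G i * (1 - sum G (J i)) = fps_X"
    and "i \<in> I"
  shows "F i = G i"
proof -
  have "\<forall>i\<in>I. \<forall>k\<le>n. F i $ k = G i $ k" for n
  proof (induction n)
    case 0
    then show ?case
      using F0 G0 by simp
  next
    case (Suc n)
    have "F i $ Suc n = G i $ Suc n" if "i \<in> I" for i
    proof -
      have "F i = fps_X + F i * sum F (J i)" "G i = fps_X + G i * sum G (J i)"
        using F[OF that] G[OF that] by (simp_all add: algebra_simps)
      moreover have "(F i * sum F (J i)) $ Suc n = (G i * sum G (J i)) $ Suc n"
        using that J[OF that] Suc.IH F0 G0
        by (intro fps_mult_nth_Suc_cong) (auto simp: fps_sum_nth intro!: sum.neutral sum.cong)
      ultimately show ?thesis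
        by (metis fps_add_nth)
    qed
    then show ?case
      using Suc.IH by (auto simp: le_Suc_eq)
  qed
  then show ?thesis
    using \<open>i \<in> I\<close> by (auto simp: fps_eq_iff)
qed

definition coloured_trees :: "nat \<Rightarrow> (nat \<Rightarrow> nat \<Rightarrow> bool) \<Rightarrow> nat \<Rightarrow> nat \<Rightarrow> nat ltree set" where
  "coloured_trees m A i n = {t. valid_col m A t \<and> label t = i \<and> num_vertices t = n}"

definition child_forests :: "nat \<Rightarrow> (nat \<Rightarrow> nat \<Rightarrow> bool) \<Rightarrow> nat \<Rightarrow> nat \<Rightarrow> nat ltree list set" where
  "child_forests m A i n =
    {ts. (\<forall>t\<in>set ts. valid_col m A t \<and> A i (label t)) \<and> sum_list (map num_vertices ts) = n}"

lemma num_vertices_neq_0 [simp]: "num_vertices t \<noteq> 0"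
  by (cases t) simp

lemma num_vertices_map_ltree: "num_vertices (map_ltree f t) = num_vertices t"
  by (induction t) (simp add: comp_def cong: map_cong)

lemma coloured_trees_0: "coloured_trees m A i 0 = {}"
  by (simp add: coloured_trees_def)

lemma coloured_trees_Suc:
  "coloured_trees m A i (Suc n) = (if 1 \<le> i \<and> i \<le> m then LNode i ` child_forests m A i n else {})"
proof (intro set_eqI iffI)
  fix t assume "t \<in> coloured_trees m A i (Suc n)"
  then show "t \<in> (if 1 \<le> i \<and> i \<le> m then LNode i ` child_forests m A i n else {})"
    by (cases t) (auto simp: coloured_trees_def child_forests_def)
qed (auto simp: coloured_trees_def child_forests_def split: if_splits)

lemma child_forests_0: "child_forests m A i 0 = {[]}"
proof -
  have "sum_list (map num_vertices ts) = 0 \<longleftrightarrow> ts = []" for ts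
    by (cases ts) auto
  then show ?thesis
    by (auto simp: child_forests_def)
qed

lemma child_forests_Suc:
  "child_forests m A i (Suc n) =
    (\<Union>a\<in>{1..Suc n}. \<Union>j\<in>{j\<in>{1..m}. A i j}.
      (\<lambda>(t, ts). t # ts) ` (coloured_trees m A j a \<times> child_forests m A i (Suc n - a)))"
proof (intro set_eqI iffI)
  fix ts assume ts: "ts \<in> child_forests m A i (Suc n)"
  then obtain t ts' where ts_def: "ts = t # ts'"
    by (cases ts) (auto simp: child_forests_def)
  let ?cons = "\<lambda>(t, ts). t # ts"
  show "ts \<in> (\<Union>a\<in>{1..Suc n}. \<Union>j\<in>{j\<in>{1..m}. A i j}.
      ?cons ` (coloured_trees m A j a \<times> child_forests m A i (Suc n - a)))"
  proof (rule UN_I[of "num_vertices t"], rule_tac [2] UN_I[of "label t"])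
    show "num_vertices t \<in> {1..Suc n}"
      using ts ts_def by (auto simp: child_forests_def Suc_le_eq simp flip: neq0_conv)
    show "label t \<in> {j \<in> {1..m}. A i j}"
      using ts ts_def by (cases t) (auto simp: child_forests_def)
    show "ts \<in> ?cons ` (coloured_trees m A (label t) (num_vertices t) \<times>
        child_forests m A i (Suc n - num_vertices t))"
      using ts ts_def
      by (intro image_eqI[of _ _ "(t, ts')"]) (auto simp: coloured_trees_def child_forests_def)
  qed
qed (auto simp: coloured_trees_def child_forests_def)

lemma finite_child_forests: "finite (child_forests m A i n)"
proof (induction n arbitrary: i rule: less_induct)
  case (less n)
  show ?case
  proof (cases n)
    case 0
    then show ?thesis
      by (simp add: child_forests_0)
  next
    case (Suc k)
    have "finite (coloured_trees m A j a)" if "a \<le> n" for j a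
      using less that by (cases a) (simp_all add: coloured_trees_0 coloured_trees_Suc)
    then show ?thesis
      using less unfolding Suc child_forests_Suc by (auto intro!: finite_imageI)
  qed
qed

lemma finite_coloured_trees: "finite (coloured_trees m A i n)"
  by (cases n) (simp_all add: coloured_trees_0 coloured_trees_Suc finite_child_forests)

lemma card_coloured_trees_Suc:
  "card (coloured_trees m A i (Suc n)) = (if 1 \<le> i \<and> i \<le> m then card (child_forests m A i n) else 0)"
  by (simp add: coloured_trees_Suc card_image inj_on_def)

lemma card_child_forests_Suc:
  "card (child_forests m A i (Suc n)) =
    (\<Sum>a = 1..Suc n. \<Sum>j\<in>{j\<in>{1..m}. A i j}.
      card (coloured_trees m A j a) * card (child_forests m A i (Suc n - a)))"
proof -
  let ?P = "\<lambda>a j. (\<lambda>(t, ts). t # ts) ` (coloured_trees m A j a \<times> child_forests m A i (Suc n - a))"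
  have finite_P: "finite (?P a j)" for a j
    by (simp add: finite_coloured_trees finite_child_forests)
  have "card (child_forests m A i (Suc n)) = (\<Sum>a = 1..Suc n. card (\<Union>j\<in>{j\<in>{1..m}. A i j}. ?P a j))"
    unfolding child_forests_Suc
    by (rule card_UN_disjoint) (simp_all add: finite_P, auto simp: coloured_trees_def)
  also have "\<dots> = (\<Sum>a = 1..Suc n. \<Sum>j\<in>{j\<in>{1..m}. A i j}. card (?P a j))"
    by (intro sum.cong refl card_UN_disjoint) (simp_all add: finite_P, auto simp: coloured_trees_def)
  also have "\<dots> = (\<Sum>a = 1..Suc n. \<Sum>j\<in>{j\<in>{1..m}. A i j}.
      card (coloured_trees m A j a) * card (child_forests m A i (Suc n - a)))"
    by (simp add: card_image inj_on_def card_cartesian_product)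
  finally show ?thesis .
qed

definition tree_gf :: "nat \<Rightarrow> (nat \<Rightarrow> nat \<Rightarrow> bool) \<Rightarrow> nat \<Rightarrow> 'a::comm_ring_1 fps" where
  "tree_gf m A i = Abs_fps (\<lambda>n. of_nat (card (coloured_trees m A i n)))"

definition forest_gf :: "nat \<Rightarrow> (nat \<Rightarrow> nat \<Rightarrow> bool) \<Rightarrow> nat \<Rightarrow> 'a::comm_ring_1 fps" where
  "forest_gf m A i = Abs_fps (\<lambda>n. of_nat (card (child_forests m A i n)))"

lemma tree_gf_nth_0: "tree_gf m A i $ 0 = 0"
  by (simp add: tree_gf_def coloured_trees_0)

lemma forest_gf_eq: "forest_gf m A i = 1 + sum (tree_gf m A) {j\<in>{1..m}. A i j} * forest_gf m A i"
proof (rule fps_ext)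
  fix n
  let ?S = "sum (tree_gf m A) {j\<in>{1..m}. A i j} :: 'a fps"
  have "?S $ 0 = 0"
    by (simp add: fps_sum_nth tree_gf_nth_0)
  show "forest_gf m A i $ n = (1 + ?S * forest_gf m A i) $ n"
  proof (cases n)
    case 0
    then show ?thesis
      using \<open>?S $ 0 = 0\<close> by (simp add: forest_gf_def child_forests_0)
  next
    case (Suc k)
    have "(?S * forest_gf m A i) $ Suc k = (\<Sum>a = 1..Suc k. ?S $ a * forest_gf m A i $ (Suc k - a))"
      using \<open>?S $ 0 = 0\<close> by (simp add: fps_mult_nth sum.atLeast_Suc_atMost)
    also have "\<dots> = forest_gf m A i $ Suc k"
      by (simp add: fps_sum_nth tree_gf_def forest_gf_def card_child_forests_Suc sum_distrib_right)
    finally show ?thesis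
      using Suc by simp
  qed
qed

lemma tree_gf_eq_X_times_forest_gf:
  assumes "1 \<le> i" "i \<le> m"
  shows "tree_gf m A i = fps_X * forest_gf m A i"
proof (rule fps_ext)
  fix n
  show "tree_gf m A i $ n = (fps_X * forest_gf m A i) $ n"
    using assms
    by (cases n) (simp_all add: tree_gf_def forest_gf_def coloured_trees_0 card_coloured_trees_Suc)
qed

lemma tree_gf_system:
  assumes "1 \<le> i" "i \<le> m"
  shows "tree_gf m A i * (1 - sum (tree_gf m A) {j\<in>{1..m}. A i j}) = fps_X"
proof -
  have "tree_gf m A i * (1 - sum (tree_gf m A) {j\<in>{1..m}. A i j}) =
      fps_X * (forest_gf m A i - sum (tree_gf m A) {j\<in>{1..m}. A i j} * forest_gf m A i)"
    by (simp add: tree_gf_eq_X_times_forest_gf[OF assms] algebra_simps)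
  also have "forest_gf m A i - sum (tree_gf m A) {j\<in>{1..m}. A i j} * forest_gf m A i = 1"
    using forest_gf_eq[of m A i] by (simp add: algebra_simps)
  finally show ?thesis
    by simp
qed

lemma t_A_eq_sum_tree_gf: "of_nat (t_A m A n) = (\<Sum>i\<in>{1..m}. tree_gf m A i) $ n"
proof -
  have "{(T, c). num_vertices T = n \<and> is_A_coloring m A T c} =
      (\<lambda>c. (shape c, c)) ` {c. valid_col m A c \<and> num_vertices c = n}"
    by (auto simp: is_A_coloring_def shape_def num_vertices_map_ltree)
  then have "t_A m A n = card {c. valid_col m A c \<and> num_vertices c = n}"
    unfolding t_A_def by (simp add: card_image inj_on_def)
  also have "{c. valid_col m A c \<and> num_vertices c = n} = (\<Union>i\<in>{1..m}. coloured_trees m A i n)"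
  proof (intro set_eqI iffI)
    fix c assume "c \<in> {c. valid_col m A c \<and> num_vertices c = n}"
    then show "c \<in> (\<Union>i\<in>{1..m}. coloured_trees m A i n)"
      by (cases c) (auto simp: coloured_trees_def)
  qed (auto simp: coloured_trees_def)
  also have "card \<dots> = (\<Sum>i\<in>{1..m}. card (coloured_trees m A i n))"
    by (rule card_UN_disjoint) (simp_all add: finite_coloured_trees, auto simp: coloured_trees_def)
  finally show ?thesis
    by (simp add: fps_sum_nth tree_gf_def)
qed

section \<open>Solution of the system for the matrix C^(2l)\<close>

definition half_root :: "nat \<Rightarrow> real fps" where
  "half_root l = fps_binomial (- 1 / 2) oo binomial_root 4 ((real l + 1) / 2)"

lemma half_root_power:
  "half_root l ^ k = fps_binomial (- (real k / 2)) oo binomial_root 4 ((real l + 1) / 2)"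
  by (simp add: half_root_def fps_compose_binomial_power[OF binomial_root_nth_0])

lemma half_root_relation:
  assumes "l \<ge> 1"
  shows "half_root l ^ (l - 1) * (1 - half_root l ^ 2) = fps_const 4 * fps_X"
proof -
  let ?y = "binomial_root 4 ((real l + 1) / 2)"
  let ?B = "\<lambda>c. fps_binomial c oo ?y"
  have "?B 1 * ?B (-1) = 1"
    by (simp add: fps_compose_binomial_mult[OF binomial_root_nth_0])
  moreover have "?B 1 = 1 + ?y"
    by (simp add: fps_binomial_1 fps_compose_add_distrib binomial_root_nth_0)
  ultimately have "1 - ?B (-1) = ?y * ?B (-1)"
    by (simp add: algebra_simps)
  have exponent: "- (real (l - 1) / 2) + -1 = - ((real l + 1) / 2)"
    using assms by (simp add: of_nat_diff field_simps)
  have "half_root l ^ (l - 1) * (1 - half_root l ^ 2) = ?y * (?B (- (real (l - 1) / 2)) * ?B (-1))"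
    using \<open>1 - ?B (-1) = ?y * ?B (-1)\<close> by (simp add: half_root_power ac_simps)
  also have "?B (- (real (l - 1) / 2)) * ?B (-1) = ?B (- ((real l + 1) / 2))"
    by (simp only: fps_compose_binomial_mult[OF binomial_root_nth_0] exponent)
  also have "?y * ?B (- ((real l + 1) / 2)) = fps_const 4 * fps_X"
    by (rule binomial_root_times_binomial) simp
  finally show ?thesis .
qed

definition colour_series :: "nat \<Rightarrow> nat \<Rightarrow> real fps" where
  "colour_series l i =
    fps_const (1 / 2) * (half_root l ^ ((i + 1) div 2 - 1) - half_root l ^ ((i + 1) div 2))"

lemma colour_series_nth_0: "colour_series l i $ 0 = 0"
  by (simp add: colour_series_def half_root_def fps_nth_power_0)

lemma sum_colour_series: "sum (colour_series l) {1..2 * q} = 1 - half_root l ^ q"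
proof (induction q)
  case (Suc q)
  have "{1..2 * Suc q} = insert (2 * q + 2) (insert (2 * q + 1) {1..2 * q})"
    by auto
  then have "sum (colour_series l) {1..2 * Suc q} =
      (colour_series l (2 * q + 1) + colour_series l (2 * q + 2)) + sum (colour_series l) {1..2 * q}"
    by (simp add: ac_simps)
  also have "colour_series l (2 * q + 1) + colour_series l (2 * q + 2) =
      half_root l ^ q - half_root l ^ Suc q"
    by (simp add: colour_series_def flip: distrib_right fps_const_add)
  finally show ?case
    using Suc.IH by simp
qed simp

lemma half_difference_product:
  fixes v c :: "'a::comm_ring_1"
  assumes "c + c = 1"
  shows "c * (v ^ a - v ^ Suc a) * (v ^ b - c * (v ^ b - v ^ Suc b)) =
    c * c * (v ^ (a + b) * (1 - v ^ 2))"
proof -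
  have "v ^ b - c * (v ^ b - v ^ Suc b) = (c + c) * v ^ b - c * (v ^ b - v ^ Suc b)"
    using assms by simp
  also have "\<dots> = c * (v ^ b * (1 + v))"
    by (simp add: algebra_simps)
  finally have first: "v ^ b - c * (v ^ b - v ^ Suc b) = c * (v ^ b * (1 + v))" .
  have second: "v ^ a - v ^ Suc a = v ^ a * (1 - v)"
    by (simp add: algebra_simps)
  show ?thesis
    unfolding first second by (simp add: power_add power2_eq_square algebra_simps)
qed

lemma C_mat_row:
  fixes i l :: nat
  assumes "1 \<le> i" "i \<le> 2 * l"
  defines "p \<equiv> (i + 1) div 2"
  defines "e \<equiv> (if even i then 2 * (l + 1 - p) - 1 else 2 * (l + 1 - p))"
  shows "{j \<in> {1..2 * l}. C_mat (2 * l) i j} = insert e {1..2 * (l - p)}"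
    and "e \<notin> {1..2 * (l - p)}" and "(e + 1) div 2 = l + 1 - p"
proof -
  show "{j \<in> {1..2 * l}. C_mat (2 * l) i j} = insert e {1..2 * (l - p)}"
  proof (cases "even i")
    case True
    then obtain q where "i = 2 * q" and "p = q"
      unfolding p_def by fastforce
    then show ?thesis
      using assms(1,2) True unfolding e_def C_mat_def by (auto; presburger)
  next
    case False
    then obtain q where "i = 2 * q + 1"
      by (blast elim: oddE)
    moreover from this have "p = q + 1"
      unfolding p_def by simp
    ultimately show ?thesis
      using assms(1,2) False unfolding e_def C_mat_def by (auto; presburger)
  qed
  show "e \<notin> {1..2 * (l - p)}" and "(e + 1) div 2 = l + 1 - p"
    using assms(1,2) unfolding e_def p_def by auto
qed

lemma colour_series_system:
  assumes "l \<ge> 1" and "1 \<le> i" "i \<le> 2 * l"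
  shows "colour_series l i * (1 - sum (colour_series l) {j \<in> {1..2 * l}. C_mat (2 * l) i j}) = fps_X"
proof -
  define p where "p = (i + 1) div 2"
  define e where "e = (if even i then 2 * (l + 1 - p) - 1 else 2 * (l + 1 - p))"
  let ?v = "half_root l" and ?c = "fps_const (1 / 2) :: real fps"
  have p: "1 \<le> p" "p \<le> l"
    using assms unfolding p_def by auto
  note row = C_mat_row[OF assms(2,3), folded p_def, folded e_def]
  have "colour_series l e = ?c * (?v ^ (l - p) - ?v ^ Suc (l - p))"
    using row(3) p by (simp add: colour_series_def Suc_diff_le)
  moreover have "sum (colour_series l) {j \<in> {1..2 * l}. C_mat (2 * l) i j} =
      colour_series l e + (1 - ?v ^ (l - p))"
    unfolding row(1) sum.insert[OF finite_atLeastAtMost row(2)] sum_colour_series ..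
  ultimately have "1 - sum (colour_series l) {j \<in> {1..2 * l}. C_mat (2 * l) i j} =
      ?v ^ (l - p) - ?c * (?v ^ (l - p) - ?v ^ Suc (l - p))"
    by simp
  moreover have "colour_series l i = ?c * (?v ^ (p - 1) - ?v ^ Suc (p - 1))"
    using p by (simp add: colour_series_def p_def)
  moreover have "?c + ?c = 1"
    by (simp flip: fps_const_add)
  ultimately have "colour_series l i * (1 - sum (colour_series l) {j \<in> {1..2 * l}. C_mat (2 * l) i j}) =
      ?c * ?c * (?v ^ (p - 1 + (l - p)) * (1 - ?v ^ 2))"
    by (simp only: half_difference_product)
  also have "p - 1 + (l - p) = l - 1"
    using p by simp
  also have "?c * ?c * (?v ^ (l - 1) * (1 - ?v ^ 2)) = fps_X"
    using half_root_relation[OF assms(1)] by (simp add: fps_const_mult flip: mult.assoc)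
  finally show ?thesis .
qed

lemma tree_gf_C_mat:
  assumes "l \<ge> 1" and "i \<in> {1..2 * l}"
  shows "tree_gf (2 * l) (C_mat (2 * l)) i = colour_series l i"
proof (rule fps_tree_system_unique[where J = "\<lambda>i. {j \<in> {1..2 * l}. C_mat (2 * l) i j}"])
  fix i assume "i \<in> {1..2 * l}"
  then show "tree_gf (2 * l) (C_mat (2 * l)) i *
      (1 - sum (tree_gf (2 * l) (C_mat (2 * l))) {j \<in> {1..2 * l}. C_mat (2 * l) i j}) = fps_X"
    by (intro tree_gf_system) auto
  from \<open>i \<in> {1..2 * l}\<close> show "colour_series l i *
      (1 - sum (colour_series l) {j \<in> {1..2 * l}. C_mat (2 * l) i j}) = fps_X"
    by (intro colour_series_system assms(1)) auto
qed (use assms(2) in \<open>auto simp: tree_gf_nth_0 colour_series_nth_0\<close>)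

theorem theorem38:
  fixes l n :: nat
  assumes "l \<ge> 1" and "n \<ge> 1"
  shows "real (t_A (2 * l) (C_mat (2 * l)) n) =
    real l / real n * 2 ^ (2 * n - 1) *
    (((real l + 1) / 2 * real n - real l / 2 - 1) gchoose (n - 1))"
proof -
  let ?g = "((real l + 1) / 2 * real n - real l / 2 - 1) gchoose (n - 1)"
  let ?Y = "fps_binomial (- (real l / 2)) oo binomial_root 4 ((real l + 1) / 2)"
  have "real n * ?Y $ n = - (real l / 2) * 4 ^ n * ?g"
    using binomial_root_binomial_coeff[of 4 n "- (real l / 2)" "(real l + 1) / 2"] assms(2)
    by (simp add: algebra_simps)
  moreover have "(4::real) ^ n = 2 * 2 ^ (2 * n - 1)"
    using assms(2) by (cases n) (simp_all add: power_mult)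
  ultimately have coeff: "- ?Y $ n = real l / real n * 2 ^ (2 * n - 1) * ?g"
    using assms(2) by (simp add: field_simps)
  have "real (t_A (2 * l) (C_mat (2 * l)) n) = (\<Sum>i\<in>{1..2 * l}. colour_series l i) $ n"
    using assms(1) by (simp add: t_A_eq_sum_tree_gf tree_gf_C_mat)
  also have "\<dots> = - ?Y $ n"
    using assms(2) unfolding sum_colour_series by (simp add: half_root_power)
  also note coeff
  finally show ?thesis .
qed

end
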